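(* $\mathsf{AP}(R_1,R_2)=\mathsf{AP}(R_1,R_3)=\mathsf{C}$.
   Context: Tuples in $\{0,1\}^4$ are written as strings $abcd$. The relations $R_1,\dots,R_5\subseteq\{0,1\}^4$ are $R_1=\{0000,1000,0100,1100,1010,0110,1001,0101,0011,1011,0111,1111\}$, $R_2=\{0000,1000,0100,1100,1010,0101,0011,1111\}$, $R_3=\{0000,1100,1010,0101,0011,1011,0111,1111\}$, $R_4=\{0000,1100,1010,0101,0011,1111\}$, $R_5=\{0000,1100,1010,0110,1001,0101,0011,1111\}$. For $R,S\subseteq\{0,1\}^4$, a Boolean function $f\colon\{0,1\}^n\to\{0,1\}$ is analogy-preserving relative to $(R,S)$ if for all $\mathbf{a},\mathbf{b},\mathbf{c},\mathbf{d}\in\{0,1\}^n$ with $(a_i,b_i,c_i,d_i)\in R$ for every $i$ and such that $(f(\mathbf{a}),f(\mathbf{b}),f(\mathbf{c}),x)\in S$ for some $x\in\{0,1\}$, we have $(f(\mathbf{a}),f(\mathbf{b}),f(\mathbf{c}),f(\mathbf{d}))\in S$; $\mathsf{AP}(R,S)$ is the set of all such functions of all arities. $\mathsf{C}$ is the set of all constant Boolean functions (of all arities). *)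

theory Defs
  imports Main
begin

text \<open>Tuples in {0,1}^4 are 4-tuples of booleans (False = 0, True = 1).
  An n-ary Boolean function is a function f :: bool list => bool, considered
  only on lists of length n (its arguments).\<close>

type_synonym tup4 = "bool \<times> bool \<times> bool \<times> bool"

definition R1 :: "tup4 set" where
  "R1 = {(False,False,False,False),(True,False,False,False),(False,True,False,False),
         (True,True,False,False),(True,False,True,False),(False,True,True,False),
         (True,False,False,True),(False,True,False,True),(False,False,True,True),
         (True,False,True,True),(False,True,True,True),(True,True,True,True)}"

definition R2 :: "tup4 set" where
  "R2 = {(False,False,False,False),(True,False,False,False),(False,True,False,False),
         (True,True,False,False),(True,False,True,False),(False,True,False,True),
         (False,False,True,True),(True,True,True,True)}"

definition R3 :: "tup4 set" where
  "R3 = {(False,False,False,False),(True,True,False,False),(True,False,True,False),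
         (False,True,False,True),(False,False,True,True),(True,False,True,True),
         (False,True,True,True),(True,True,True,True)}"

definition analogy_preserving :: "tup4 set \<Rightarrow> tup4 set \<Rightarrow> nat \<Rightarrow> (bool list \<Rightarrow> bool) \<Rightarrow> bool" where
  "analogy_preserving R S n f \<longleftrightarrow>
     (\<forall>a b c d. length a = n \<and> length b = n \<and> length c = n \<and> length d = n \<longrightarrow>
        (\<forall>i<n. (a!i, b!i, c!i, d!i) \<in> R) \<longrightarrow>
        (\<exists>x. (f a, f b, f c, x) \<in> S) \<longrightarrow>
        (f a, f b, f c, f d) \<in> S)"

definition constant_fun :: "nat \<Rightarrow> (bool list \<Rightarrow> bool) \<Rightarrow> bool" where
  "constant_fun n f \<longleftrightarrow> (\<exists>v. \<forall>a. length a = n \<longrightarrow> f a = v)"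

end

theory Submission
  imports Defs
begin

text \<open>Constant functions trivially preserve any relation containing 0000 and 1111. Conversely,
  \<open>R\<^sub>1\<close> contains every pattern \<open>xyyx\<close>; for a non-constant \<open>f\<close> pick \<open>u\<close>, \<open>v\<close> with \<open>f u \<noteq> f v\<close> and apply
  \<open>f\<close> to the rows \<open>u, v, v, u\<close>. This yields \<open>1001\<close> (resp. \<open>0110\<close>), which is not in \<open>R\<^sub>2\<close> (resp. \<open>R\<^sub>3\<close>),
  although \<open>100x\<close> (resp. \<open>011x\<close>) is solvable there.\<close>

lemma not_constant_fun_takes_value:
  assumes "\<not> constant_fun n f"
  shows "\<exists>u. length u = n \<and> f u = b"
  using assms unfolding constant_fun_def by blast

lemma constant_fun_imp_analogy_preserving:
  assumes "constant_fun n f"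
    and "(False, False, False, False) \<in> S" and "(True, True, True, True) \<in> S"
  shows "analogy_preserving R S n f"
proof -
  obtain v where "\<forall>a. length a = n \<longrightarrow> f a = v"
    using assms(1) unfolding constant_fun_def by blast
  then show ?thesis
    using assms(2,3) unfolding analogy_preserving_def by (cases v) auto
qed

lemma analogy_preserving_imp_constant_fun:
  assumes ap: "analogy_preserving R S n f"
    and mirror: "\<And>x y. (x, y, y, x) \<in> R"
    and solvable: "(b, \<not> b, \<not> b, x) \<in> S"
    and not_mirror: "(b, \<not> b, \<not> b, b) \<notin> S"
  shows "constant_fun n f"
proof (rule ccontr)
  assume "\<not> constant_fun n f"
  then obtain u v where u: "length u = n" "f u = b" and v: "length v = n" "f v = (\<not> b)"
    using not_constant_fun_takes_value by metis
  have "(f u, f v, f v, x) \<in> S"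
    using u v solvable by simp
  then have "(f u, f v, f v, f u) \<in> S"
    using ap u v mirror unfolding analogy_preserving_def by blast
  with u v not_mirror show False by simp
qed

lemma R1_mirror: "(x, y, y, x) \<in> R1"
  unfolding R1_def by (cases x; cases y) simp_all

theorem mainTheorem12:
  shows "\<forall>n f. (analogy_preserving R1 R2 n f \<longleftrightarrow> constant_fun n f)
                \<and> (analogy_preserving R1 R3 n f \<longleftrightarrow> constant_fun n f)"
proof (intro allI conjI iffI)
  fix n f
  show "analogy_preserving R1 R2 n f \<Longrightarrow> constant_fun n f"
    by (rule analogy_preserving_imp_constant_fun[where b = True and x = False])
       (auto simp: R1_mirror R2_def)
  show "analogy_preserving R1 R3 n f \<Longrightarrow> constant_fun n f"
    by (rule analogy_preserving_imp_constant_fun[where b = False and x = True])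
       (auto simp: R1_mirror R3_def)
  show "constant_fun n f \<Longrightarrow> analogy_preserving R1 R2 n f"
    by (rule constant_fun_imp_analogy_preserving) (simp_all add: R2_def)
  show "constant_fun n f \<Longrightarrow> analogy_preserving R1 R3 n f"
    by (rule constant_fun_imp_analogy_preserving) (simp_all add: R3_def)
qed

end
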